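(* Let $V$ be finite and let $\mathbb{M}=(M,A)$, $\mathbb{M}'=(M',A')$ be dependence models for $(V,\tau)$. A non-empty relation $Z\subseteq A\times A'$ is a dependence bisimulation if and only if for every $(s,s')\in Z$: (a) $s\models P\mathbf{x}$ iff $s'\models P\mathbf{x}$ for all $P\in\tau$, $\mathbf{x}\in V^{ar(P)}$; (b) $s\models D_Xy$ iff $s'\models D_Xy$ for all $X\cup\{y\}\subseteq V$; (c) for every $t\in A$ there is $t'\in A'$ with $s'=_{V^{s,t}}t'$ and $(t,t')\in Z$; (d) for every $t'\in A'$ there is $t\in A$ with $s=_{V^{s',t'}}t$ and $(t,t')\in Z$.
   Context: A vocabulary is a pair $(V,\tau)$ of a set of variables $V$ and a relational language $\tau$ with arity map $ar$. A dependence model is a pair $\mathbb{M}=(M,A)$ with $M$ a $\tau$-structure with domain $O$ and $A\subseteq O^V$ a set of assignments (the team). For $X\subseteq V$ and $s,t\in A$, $s=_Xt$ means $s\restriction X=t\restriction X$. Semantics at $s\in A$: $s\models P\mathbf{x}$ iff $s(\mathbf{x})\in P^M$; $s\models D_Xy$ iff for all $t\in A$, $s=_Xt$ implies $s(y)=t(y)$. For $s,t\in A$ let $V^{s,t}=\{v\in V\mid s(v)=t(v)\}$. A set $X\subseteq V$ is dependence-closed at $s'$ if for all $y\in V$, $s'\models D_Xy$ implies $y\in X$. A non-empty relation $Z\subseteq A\times A'$ is a dependence bisimulation if for every $(s,s')\in Z$: (Atom) $s\models P\mathbf{x}$ iff $s'\models P\mathbf{x}$ for all $P\in\tau$, $\mathbf{x}\in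 V^{ar(P)}$; (Forth) for every $t\in A$, $V^{s,t}$ is dependence-closed at $s'$ and there is $t'\in A'$ with $s'=_{V^{s,t}}t'$ and $(t,t')\in Z$; (Back) for every $t'\in A'$, $V^{s',t'}$ is dependence-closed at $s$ and there is $t\in A$ with $s=_{V^{s',t'}}t$ and $(t,t')\in Z$. *)

theory Defs
  imports Main "HOL-Library.FuncSet"
begin

(* A tau-structure: domain Dom :: 'o set, interpretation I :: 'p => 'o list set
   (I P is the relation P^M, a set of ar P-tuples represented as lists).
   Assignments are functions V -> Dom, represented extensionally (undefined outside V). *)

definition structure_on :: "'p set \<Rightarrow> ('p \<Rightarrow> nat) \<Rightarrow> 'o set \<Rightarrow> ('p \<Rightarrow> 'o list set) \<Rightarrow> bool" where
  "structure_on tau ar Dom I \<longleftrightarrow>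
     (\<forall>P\<in>tau. \<forall>os\<in>I P. length os = ar P \<and> set os \<subseteq> Dom)"

definition dep_model :: "'v set \<Rightarrow> 'p set \<Rightarrow> ('p \<Rightarrow> nat) \<Rightarrow> 'o set \<Rightarrow> ('p \<Rightarrow> 'o list set)
    \<Rightarrow> ('v \<Rightarrow> 'o) set \<Rightarrow> bool" where
  "dep_model V tau ar Dom I A \<longleftrightarrow> structure_on tau ar Dom I \<and> A \<subseteq> (V \<rightarrow>\<^sub>E Dom)"

definition sat_atom :: "('p \<Rightarrow> 'o list set) \<Rightarrow> ('v \<Rightarrow> 'o) \<Rightarrow> 'p \<Rightarrow> 'v list \<Rightarrow> bool" where
  "sat_atom I s P xs \<longleftrightarrow> map s xs \<in> I P"

definition agree_on :: "'v set \<Rightarrow> ('v \<Rightarrow> 'o) \<Rightarrow> ('v \<Rightarrow> 'o) \<Rightarrow> bool" where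
  "agree_on X s t \<longleftrightarrow> (\<forall>v\<in>X. s v = t v)"

definition sat_dep :: "('v \<Rightarrow> 'o) set \<Rightarrow> ('v \<Rightarrow> 'o) \<Rightarrow> 'v set \<Rightarrow> 'v \<Rightarrow> bool" where
  "sat_dep A s X y \<longleftrightarrow> (\<forall>t\<in>A. agree_on X s t \<longrightarrow> s y = t y)"

definition agree_set :: "'v set \<Rightarrow> ('v \<Rightarrow> 'o) \<Rightarrow> ('v \<Rightarrow> 'o) \<Rightarrow> 'v set" where
  "agree_set V s t = {v\<in>V. s v = t v}"

definition dep_closed :: "'v set \<Rightarrow> ('v \<Rightarrow> 'o) set \<Rightarrow> 'v set \<Rightarrow> ('v \<Rightarrow> 'o) \<Rightarrow> bool" where
  "dep_closed V A X s \<longleftrightarrow> (\<forall>y\<in>V. sat_dep A s X y \<longrightarrow> y \<in> X)"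

definition atom_cond :: "'v set \<Rightarrow> 'p set \<Rightarrow> ('p \<Rightarrow> nat) \<Rightarrow> ('p \<Rightarrow> 'o list set) \<Rightarrow> ('p \<Rightarrow> 'o2 list set)
    \<Rightarrow> ('v \<Rightarrow> 'o) \<Rightarrow> ('v \<Rightarrow> 'o2) \<Rightarrow> bool" where
  "atom_cond V tau ar I I' s s' \<longleftrightarrow>
     (\<forall>P\<in>tau. \<forall>xs. set xs \<subseteq> V \<and> length xs = ar P \<longrightarrow> (sat_atom I s P xs \<longleftrightarrow> sat_atom I' s' P xs))"

definition dep_bisim :: "'v set \<Rightarrow> 'p set \<Rightarrow> ('p \<Rightarrow> nat)
    \<Rightarrow> ('p \<Rightarrow> 'o list set) \<Rightarrow> ('v \<Rightarrow> 'o) set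
    \<Rightarrow> ('p \<Rightarrow> 'o2 list set) \<Rightarrow> ('v \<Rightarrow> 'o2) set
    \<Rightarrow> (('v \<Rightarrow> 'o) \<times> ('v \<Rightarrow> 'o2)) set \<Rightarrow> bool" where
  "dep_bisim V tau ar I A I' A' Z \<longleftrightarrow>
     Z \<noteq> {} \<and> Z \<subseteq> A \<times> A' \<and>
     (\<forall>(s, s')\<in>Z.
        atom_cond V tau ar I I' s s' \<and>
        (\<forall>t\<in>A. dep_closed V A' (agree_set V s t) s' \<and>
                (\<exists>t'\<in>A'. agree_on (agree_set V s t) s' t' \<and> (t, t') \<in> Z)) \<and>
        (\<forall>t'\<in>A'. dep_closed V A (agree_set V s' t') s \<and>
                (\<exists>t\<in>A. agree_on (agree_set V s' t') s t \<and> (t, t') \<in> Z)))"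

end

theory Submission
  imports Defs
begin

text \<open>For t in the team A, the agreement set V^{s,t} is always dependence-closed at s in A
  itself, since t witnesses the failure of every dependence D_{V^{s,t}} y with y outside it.
  Hence dependence-closure of the agreement sets of one model at the matched assignment of
  the other says exactly that every dependence atom true at that assignment is true at the
  first one as well (dependence atoms being monotone in X). The Forth and Back closure
  conditions together are therefore equivalent to agreement on all dependence atoms.\<close>

lemma sat_dep_mono:
  assumes "X \<subseteq> Y" and "sat_dep A s X y"
  shows "sat_dep A s Y y"
  using assms unfolding sat_dep_def agree_on_def by blast

lemma agree_set_subset: "agree_set V s t \<subseteq> V"
  unfolding agree_set_def by auto

lemma dep_closed_agree_set:
  assumes "t \<in> A"
  shows "dep_closed V A (agree_set V s t) s"
  unfolding dep_closed_def
proof (intro ballI impI)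
  fix y assume "y \<in> V" and "sat_dep A s (agree_set V s t) y"
  then have "s y = t y"
    using assms unfolding sat_dep_def agree_on_def agree_set_def by blast
  then show "y \<in> agree_set V s t"
    using \<open>y \<in> V\<close> unfolding agree_set_def by simp
qed

lemma sat_dep_transfer_if_dep_closed:
  assumes closed: "\<forall>t'\<in>A'. dep_closed V A (agree_set V s' t') s"
    and XyV: "X \<union> {y} \<subseteq> V"
    and dep: "sat_dep A s X y"
  shows "sat_dep A' s' X y"
  unfolding sat_dep_def
proof (intro ballI impI)
  fix t' assume t': "t' \<in> A'" and agree: "agree_on X s' t'"
  have "X \<subseteq> agree_set V s' t'"
    using agree XyV unfolding agree_on_def agree_set_def by auto
  then have "sat_dep A s (agree_set V s' t') y"
    using dep by (rule sat_dep_mono)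
  moreover have "y \<in> V"
    using XyV by simp
  ultimately have "y \<in> agree_set V s' t'"
    using closed t' unfolding dep_closed_def by blast
  then show "s' y = t' y"
    unfolding agree_set_def by simp
qed

lemma dep_closed_transfer:
  assumes "\<forall>y\<in>V. sat_dep A' s' X y \<longrightarrow> sat_dep A s X y"
    and "dep_closed V A X s"
  shows "dep_closed V A' X s'"
  using assms unfolding dep_closed_def by blast

lemma dep_closed_agree_sets_iff_sat_dep_eq:
  "(\<forall>t\<in>A. dep_closed V A' (agree_set V s t) s') \<and>
   (\<forall>t'\<in>A'. dep_closed V A (agree_set V s' t') s)
   \<longleftrightarrow> (\<forall>X y. X \<union> {y} \<subseteq> V \<longrightarrow> (sat_dep A s X y \<longleftrightarrow> sat_dep A' s' X y))"
  (is "?closed \<longleftrightarrow> ?eq")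
proof
  assume ?closed
  then have forth_closed: "\<forall>t\<in>A. dep_closed V A' (agree_set V s t) s'"
    and back_closed: "\<forall>t'\<in>A'. dep_closed V A (agree_set V s' t') s"
    by blast+
  show ?eq
  proof (intro allI impI iffI)
    fix X y assume XyV: "X \<union> {y} \<subseteq> V"
    show "sat_dep A' s' X y" if "sat_dep A s X y"
      using sat_dep_transfer_if_dep_closed[OF back_closed XyV that] .
    show "sat_dep A s X y" if "sat_dep A' s' X y"
      using sat_dep_transfer_if_dep_closed[OF forth_closed XyV that] .
  qed
next
  assume ?eq
  then have eq: "X \<union> {y} \<subseteq> V \<Longrightarrow> sat_dep A s X y \<longleftrightarrow> sat_dep A' s' X y" for X y
    by blast
  have "dep_closed V A' (agree_set V s t) s'" if "t \<in> A" for t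
    by (rule dep_closed_transfer[OF _ dep_closed_agree_set[OF that]])
      (simp add: eq agree_set_subset)
  moreover have "dep_closed V A (agree_set V s' t') s" if "t' \<in> A'" for t'
    by (rule dep_closed_transfer[OF _ dep_closed_agree_set[OF that]])
      (simp add: eq agree_set_subset)
  ultimately show ?closed
    by blast
qed

theorem mainTheorem2:
  fixes V :: "'v set" and tau :: "'p set" and ar :: "'p \<Rightarrow> nat"
    and Dom :: "'o set" and I :: "'p \<Rightarrow> 'o list set" and A :: "('v \<Rightarrow> 'o) set"
    and Dom' :: "'o2 set" and I' :: "'p \<Rightarrow> 'o2 list set" and A' :: "('v \<Rightarrow> 'o2) set"
    and Z :: "(('v \<Rightarrow> 'o) \<times> ('v \<Rightarrow> 'o2)) set"
  assumes "finite V"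
    and "dep_model V tau ar Dom I A"
    and "dep_model V tau ar Dom' I' A'"
    and "Z \<noteq> {}" and "Z \<subseteq> A \<times> A'"
  shows "dep_bisim V tau ar I A I' A' Z \<longleftrightarrow>
    (\<forall>(s, s')\<in>Z.
       atom_cond V tau ar I I' s s' \<and>
       (\<forall>X y. X \<union> {y} \<subseteq> V \<longrightarrow> (sat_dep A s X y \<longleftrightarrow> sat_dep A' s' X y)) \<and>
       (\<forall>t\<in>A. \<exists>t'\<in>A'. agree_on (agree_set V s t) s' t' \<and> (t, t') \<in> Z) \<and>
       (\<forall>t'\<in>A'. \<exists>t\<in>A. agree_on (agree_set V s' t') s t \<and> (t, t') \<in> Z))"
  using assms(4,5)
  by (simp add: dep_bisim_def ball_conj_distrib conj_ac
      flip: dep_closed_agree_sets_iff_sat_dep_eq[simplified])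

end
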